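(* Let $\mathfrak g$ be a Lie algebra with scalar product $\langle\cdot,\cdot\rangle$ such that $\operatorname{ad}(X)^\top$ exists for every $X\in\mathfrak g$. Let $A:\mathfrak g\to\mathfrak g^*$, $A(X)=\langle X,\cdot\rangle$, be the inertia operator, $\mathfrak g^*_{\rm reg}=A(\mathfrak g)$ with the scalar product $\langle A(X),A(Y)\rangle:=\langle X,Y\rangle$, and let $\mathfrak g^*_{\rm reg}\rtimes\mathfrak g$ be the semidirect product for the coadjoint action $b=\operatorname{ad}^*$, where $(\operatorname{ad}^*(X)m)(Y)=-m([X,Y])$ (this action preserves $\mathfrak g^*_{\rm reg}$, since $\operatorname{ad}^*(X)A(Y)=-A(\operatorname{ad}(X)^\top Y)$), endowed with the scalar product $\langle m_1,m_2\rangle+\langle X_1,X_2\rangle$. Then for curves $u,v$ in $\mathfrak g$, the curve $(A(v),u)$ satisfies the Euler equation in $\mathfrak g^*_{\rm reg}\rtimes\mathfrak g$ (the geodesic equation for the right invariant metric on the magnetic extension $\mathfrak g^*_{\rm reg}\rtimes G$) if and only if $$\frac{d}{dt}u=-\operatorname{ad}(u)^\top u+\operatorname{ad}(v)^\top v,\qquad \frac{d}{dt}v=\operatorname{ad}(u)v.$$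
   Context: The semidirect product bracket is $[(m_1,X_1),(m_2,X_2)]=(\operatorname{ad}^*(X_1)m_2-\operatorname{ad}^*(X_2)m_1,[X_1,X_2])$. The Euler equation in a Lie algebra $\mathfrak k$ with scalar product is $\dot w=-\operatorname{ad}(w)^\top w$, $\operatorname{ad}(w)^\top$ being the adjoint of $[w,\cdot]$. *)

theory Defs
  imports "HOL-Analysis.Analysis"
begin

definition lie_algebra :: "('g::real_vector \<Rightarrow> 'g \<Rightarrow> 'g) \<Rightarrow> bool" where
  "lie_algebra br \<longleftrightarrow> bilinear br \<and> (\<forall>x y. br x y = - br y x) \<and>
     (\<forall>x y z. br x (br y z) + br y (br z x) + br z (br x y) = 0)"

definition has_adT :: "('g::real_inner \<Rightarrow> 'g \<Rightarrow> 'g) \<Rightarrow> bool" where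
  "has_adT br \<longleftrightarrow> (\<forall>X. \<exists>T. \<forall>Y Z. inner (br X Y) Z = inner Y (T Z))"

definition adT :: "('g::real_inner \<Rightarrow> 'g \<Rightarrow> 'g) \<Rightarrow> 'g \<Rightarrow> 'g \<Rightarrow> 'g" where
  "adT br X Z = (SOME w. \<forall>Y. inner (br X Y) Z = inner Y w)"

definition inertia :: "'g::real_inner \<Rightarrow> ('g \<Rightarrow> real)" where
  "inertia X = (\<lambda>Y. inner X Y)"

definition inertia_inv :: "('g::real_inner \<Rightarrow> real) \<Rightarrow> 'g" where
  "inertia_inv m = (THE X. inertia X = m)"

definition coad :: "('g \<Rightarrow> 'g \<Rightarrow> 'g) \<Rightarrow> 'g \<Rightarrow> ('g \<Rightarrow> real) \<Rightarrow> ('g \<Rightarrow> real)" where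
  "coad br X m = (\<lambda>Y. - m (br X Y))"

definition sd_br :: "('g \<Rightarrow> 'g \<Rightarrow> 'g) \<Rightarrow> ('g \<Rightarrow> real) \<times> 'g \<Rightarrow> ('g \<Rightarrow> real) \<times> 'g
    \<Rightarrow> ('g \<Rightarrow> real) \<times> 'g" where
  "sd_br br p q = (coad br (snd p) (fst q) - coad br (snd q) (fst p), br (snd p) (snd q))"

definition sd_inner :: "('g::real_inner \<Rightarrow> real) \<times> 'g \<Rightarrow> ('g \<Rightarrow> real) \<times> 'g \<Rightarrow> real" where
  "sd_inner p q = inner (inertia_inv (fst p)) (inertia_inv (fst q)) + inner (snd p) (snd q)"

definition sd_carrier :: "(('g::real_inner \<Rightarrow> real) \<times> 'g) set" where
  "sd_carrier = range inertia \<times> UNIV"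

text \<open>Euler equation  w' = - ad(w)^T w  in g*_reg \<rtimes> g. The element z = ad(w)^T w
 is characterised by <z,y> = <w,[w,y]> for all y in the carrier. The topology
 (hence the derivative) on g*_reg is the one of its scalar product, i.e. the one
 transported from g via A.\<close>
definition sd_euler :: "('g::real_inner \<Rightarrow> 'g \<Rightarrow> 'g) \<Rightarrow> (real \<Rightarrow> ('g \<Rightarrow> real) \<times> 'g) \<Rightarrow> bool" where
  "sd_euler br w \<longleftrightarrow> (\<forall>t. w t \<in> sd_carrier) \<and>
     (\<forall>t. \<exists>z \<in> sd_carrier.
        (\<forall>y \<in> sd_carrier. sd_inner z y = sd_inner (w t) (sd_br br (w t) y)) \<and>
        ((\<lambda>s. inertia_inv (fst (w s))) has_vector_derivative - inertia_inv (fst z)) (at t) \<and>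
        ((\<lambda>s. snd (w s)) has_vector_derivative - snd z) (at t))"

end

theory Submission
  imports Defs
begin

(*
  Write every element of the carrier of g*_reg \<rtimes> g as (A(a), b).
  Because A is injective and <A(a),A(b)> = <a,b>, the scalar product on the
  carrier is just <a,Y> + <b,X>.  For the point w = (A(v), u) we compute the
  bracket [w, (A(Y), X)] explicitly, using ad*(X) A(Y) = - A(ad(X)^T Y), and
  then the pairing <w, [w, (A(Y), X)]> = <-[u,v], Y> + <ad(u)^T u - ad(v)^T v, X>;
  only antisymmetry of the bracket is needed here.  Since a vector is determined
  by its scalar products, the element z = ad(w)^T w of the carrier is therefore
  unique and equals (A(-[u,v]), ad(u)^T u - ad(v)^T v).  Substituting this z,
  the Euler equation w' = -z splits into its two components, which are
  exactly the stated equations for v' and u'.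
*)

text \<open>A is injective, since a vector is determined by its scalar products.\<close>
lemma inertia_inj: "inertia X = inertia Y \<Longrightarrow> X = (Y::'g::real_inner)"
  unfolding inertia_def fun_eq_iff by (simp add: vector_eq_rdot)

lemma inertia_inv_inertia [simp]: "inertia_inv (inertia X) = X"
  unfolding inertia_inv_def by (rule the_equality) (auto dest: inertia_inj)

lemma sd_inner_inertia [simp]:
  "sd_inner (inertia a, b) (inertia Y, X) = inner a Y + inner b X"
  by (simp add: sd_inner_def)

lemma sd_carrier_iff: "p \<in> sd_carrier \<longleftrightarrow> (\<exists>a b. p = (inertia a, b))"
  unfolding sd_carrier_def by auto

lemma inertia_in_sd_carrier [simp]: "(inertia a, b) \<in> sd_carrier"
  by (auto simp: sd_carrier_iff)

lemma inner_pair_eq_iff: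
  fixes a b c d :: "'g::real_inner"
  shows "(\<forall>Y X. inner a Y + inner b X = inner c Y + inner d X) \<longleftrightarrow> a = c \<and> b = d"
proof
  assume h: "\<forall>Y X. inner a Y + inner b X = inner c Y + inner d X"
  have "\<forall>Y. inner a Y = inner c Y" using h[rule_format, of _ 0] by simp
  moreover have "\<forall>X. inner b X = inner d X" using h[rule_format, of 0] by simp
  ultimately show "a = c \<and> b = d" by (simp add: vector_eq_rdot)
qed simp

lemma adT_prop:
  assumes "has_adT br"
  shows "inner (br X Y) Z = inner Y (adT br X Z)"
proof -
  obtain T where "\<forall>Y Z. inner (br X Y) Z = inner Y (T Z)"
    using assms unfolding has_adT_def by blast
  hence "\<exists>w. \<forall>Y. inner (br X Y) Z = inner Y w" by blast
  hence "\<forall>Y. inner (br X Y) Z = inner Y (adT br X Z)"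
    unfolding adT_def by (rule someI_ex)
  thus ?thesis by blast
qed

lemma coad_inertia:
  assumes "has_adT br"
  shows "coad br X (inertia Y) = inertia (- adT br X Y)"
  unfolding coad_def inertia_def fun_eq_iff
  using adT_prop[OF assms] by (simp add: inner_commute)

lemma sd_br_inertia:
  assumes "has_adT br"
  shows "sd_br br (inertia v, u) (inertia Y, X)
           = (inertia (adT br X v - adT br u Y), br u X)"
proof -
  have "inertia (- adT br u Y) - inertia (- adT br X v) = inertia (adT br X v - adT br u Y)"
    by (simp add: inertia_def fun_eq_iff inner_diff_left)
  thus ?thesis by (simp add: sd_br_def coad_inertia[OF assms])
qed

text \<open>The pairing <w, [w, y]> for w = (A(v), u) and y = (A(Y), X).  This is the
  only place where the algebraic structure (antisymmetry) enters.\<close>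
lemma sd_euler_pairing:
  assumes anti: "\<And>x y. br x y = - br y x" and ha: "has_adT br"
  shows "sd_inner (inertia v, u) (sd_br br (inertia v, u) (inertia Y, X)) =
    inner (- br u v) Y + inner (adT br u u - adT br v v) X"
proof -
  have "inner v (adT br u Y) = inner (br u v) Y"
    using adT_prop[OF ha, of u v Y] by (simp add: inner_commute)
  moreover have "inner v (adT br X v) = - inner X (adT br v v)"
    using adT_prop[OF ha, of X v v] adT_prop[OF ha, of v X v] anti[of X v] by simp
  moreover have "inner u (br u X) = inner X (adT br u u)"
    using adT_prop[OF ha, of u X u] by (simp add: inner_commute)
  ultimately show ?thesis
    by (simp add: sd_br_inertia[OF ha] inner_diff_right inner_diff_left inner_commute[of X])
qed

lemma sd_adT_self_iff:
  assumes anti: "\<And>x y. br x y = - br y x" and ha: "has_adT br"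
    and z: "z \<in> sd_carrier"
  shows "(\<forall>y \<in> sd_carrier. sd_inner z y = sd_inner (inertia v, u) (sd_br br (inertia v, u) y))
     \<longleftrightarrow> z = (inertia (- br u v), adT br u u - adT br v v)"
proof -
  obtain a b where ab: "z = (inertia a, b)" using z sd_carrier_iff by blast
  have "(\<forall>y \<in> sd_carrier. sd_inner z y = sd_inner (inertia v, u) (sd_br br (inertia v, u) y))
     \<longleftrightarrow> (\<forall>Y X. inner a Y + inner b X
                 = inner (- br u v) Y + inner (adT br u u - adT br v v) X)"
  proof
    assume h: "\<forall>y \<in> sd_carrier. sd_inner z y = sd_inner (inertia v, u) (sd_br br (inertia v, u) y)"
    show "\<forall>Y X. inner a Y + inner b X = inner (- br u v) Y + inner (adT br u u - adT br v v) X"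
      using h[rule_format, OF inertia_in_sd_carrier] by (simp add: ab sd_euler_pairing[OF anti ha])
  qed (auto simp: ab sd_carrier_iff sd_euler_pairing[OF anti ha])
  also have "\<dots> \<longleftrightarrow> a = - br u v \<and> b = adT br u u - adT br v v"
    by (rule inner_pair_eq_iff)
  also have "\<dots> \<longleftrightarrow> z = (inertia (- br u v), adT br u u - adT br v v)"
    by (auto simp: ab dest: inertia_inj)
  finally show ?thesis .
qed

theorem proposition8p1:
  fixes br :: "'g::real_inner \<Rightarrow> 'g \<Rightarrow> 'g" and u v :: "real \<Rightarrow> 'g"
  assumes "lie_algebra br" and "has_adT br"
  shows "sd_euler br (\<lambda>t. (inertia (v t), u t)) \<longleftrightarrow>
    (\<forall>t. (u has_vector_derivative (- adT br (u t) (u t) + adT br (v t) (v t))) (at t) \<and>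
         (v has_vector_derivative br (u t) (v t)) (at t))"
proof -
  have anti: "\<And>x y. br x y = - br y x"
    using assms(1) unfolding lie_algebra_def by blast
  let ?z = "\<lambda>t. (inertia (- br (u t) (v t)), adT br (u t) (u t) - adT br (v t) (v t))"
  text \<open>At each time the Euler condition reduces to the two derivatives of
    the unique candidate ?z.\<close>
  have "(\<exists>z \<in> sd_carrier.
          (\<forall>y \<in> sd_carrier. sd_inner z y = sd_inner (inertia (v t), u t) (sd_br br (inertia (v t), u t) y)) \<and>
          ((\<lambda>s. inertia_inv (fst (inertia (v s), u s))) has_vector_derivative - inertia_inv (fst z)) (at t) \<and>
          ((\<lambda>s. snd (inertia (v s), u s)) has_vector_derivative - snd z) (at t))
     \<longleftrightarrow> (v has_vector_derivative - inertia_inv (fst (?z t))) (at t) \<and>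
         (u has_vector_derivative - snd (?z t)) (at t)" for t
    using sd_adT_self_iff[OF anti assms(2)] inertia_in_sd_carrier
    by (auto simp: fun_eq_iff[symmetric])
  thus ?thesis
    unfolding sd_euler_def by (auto simp: sd_carrier_iff)
qed

end
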